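(* Let $F\colon\mathbb{N}\to(0,\infty)$ satisfy $\sum_{k=1}^\infty 1/F(k)<\infty$ and let $T=\sum_{k=\Xi(0)}^\infty\tau(k)$ be the explosion time of the birth process with rate function $F$ and initial value $\Xi(0)\in\mathbb{N}$. Then $T$ has a density $g$ with the following properties: 1. $g$ is bounded, $g(0)=0$ and $g(t)>0$ for all $t>0$. 2. There is a unique maximum point $m>0$ such that $g$ is increasing on $(0,m)$ and decreasing on $(m,\infty)$. 3. For any $t_0>0$, $\big|\frac{d}{dt}\log g(t)\big|$ is bounded uniformly in $t\ge t_0$. 4. $g$ is not analytic at $0$; in particular $\frac{d^k}{dt^k}g(0)=0$ for all $k\ge1$.
   Context: $\mathbb{N}=\{1,2,\dots\}$. The $\tau(k)$, $k\ge\Xi(0)$, are independent, $\tau(k)$ exponentially distributed with rate $F(k)$; the birth process is $\Xi(t)=\min\{k:\sum_{l=\Xi(0)}^k\tau(l)>t\}$, and $T=\sum_{k\ge\Xi(0)}\tau(k)$ is its explosion time. *)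

theory Defs
  imports "HOL-Probability.Probability"
begin

end

theory Submission
  imports Defs
begin

text \<open>
  Write \<open>T\<^sub>j\<close> for the time to explosion after the \<open>j\<close>-th holding time has started. Then
  \<open>T\<^sub>j = \<tau>\<^sub>j + T\<^sub>j\<^sub>+\<^sub>1\<close> with independent summands, so \<open>T\<^sub>j\<close> has the density
  \<open>g\<^sub>j(t) = E[\<lambda>\<^sub>j exp (- \<lambda>\<^sub>j (t - T\<^sub>j\<^sub>+\<^sub>1)); T\<^sub>j\<^sub>+\<^sub>1 \<le> t]\<close>, and differentiating this convolution
  gives \<open>g\<^sub>j' = \<lambda>\<^sub>j (g\<^sub>j\<^sub>+\<^sub>1 - g\<^sub>j)\<close>. Hence all \<open>g\<^sub>j\<close> are smooth with all derivatives vanishing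
  at \<open>0\<close>, and \<open>g\<^sub>j\<close>, being \<open>0\<close> on \<open>(-\<infinity>, 0)\<close> but positive on \<open>(0, \<infinity>)\<close>, is not analytic at \<open>0\<close>.

  The shape of \<open>g\<^sub>0\<close> is governed by the ratio \<open>g\<^sub>1 / g\<^sub>0\<close>, which is nonincreasing. For finitely many
  holding times this follows by backward induction from the last, exponential, density: convolution
  with an exponential density preserves the property that \<open>u (t - w) / u t\<close> is nondecreasing in
  \<open>t\<close>, and the monotonicity of the ratio survives the limit. The ratio crosses \<open>1\<close> exactly once,
  because on an interval where \<open>g\<^sub>1 = g\<^sub>0\<close> all \<open>g\<^sub>j\<close> would be equal and constant, contradicting
  \<open>T\<^sub>j \<longrightarrow> 0\<close>; this crossing point is the mode. Finally \<open>(ln g\<^sub>0)' = \<lambda>\<^sub>0 (g\<^sub>1 / g\<^sub>0 - 1)\<close> is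
  bounded on \<open>[t\<^sub>0, \<infinity>)\<close> because the ratio is monotone.
\<close>

lemma convolution_density_left:
  fixes f :: "real \<Rightarrow> ennreal"
  assumes [measurable]: "f \<in> borel_measurable borel"
  assumes fin: "finite_measure (density lborel f)" "finite_measure N"
  assumes sN[measurable_cong, simp]: "sets N = sets borel"
  shows "density lborel f \<star> N = density lborel (\<lambda>x. \<integral>\<^sup>+y. f (x - y) \<partial>N)"
    (is "?l = ?r")
proof (intro measure_eqI)
  interpret N: finite_measure N by fact
  interpret pair_sigma_finite lborel N ..
  fix A assume "A \<in> sets ?l"
  then have [measurable]: "A \<in> sets borel"
    by simp
  have "emeasure ?l A = (\<integral>\<^sup>+x. \<integral>\<^sup>+y. indicator A (x + y) \<partial>N \<partial>density lborel f)"
    using fin by (intro convolution_emeasure') auto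
  also have "\<dots> = (\<integral>\<^sup>+x. (\<integral>\<^sup>+y. f x * indicator A (x + y) \<partial>N) \<partial>lborel)"
    by (subst nn_integral_density) (auto intro!: nn_integral_cong nn_integral_cmult[symmetric])
  also have "\<dots> = (\<integral>\<^sup>+y. (\<integral>\<^sup>+x. f x * indicator A (x + y) \<partial>lborel) \<partial>N)"
    by (rule Fubini'[symmetric]) measurable
  also have "\<dots> = (\<integral>\<^sup>+y. (\<integral>\<^sup>+x. f (x - y) * indicator A x \<partial>lborel) \<partial>N)"
  proof -
    have "(\<integral>\<^sup>+x. f x * indicator A (x + y) \<partial>lborel) = (\<integral>\<^sup>+x. f (x - y) * indicator A x \<partial>lborel)"
      for y
      by (subst nn_integral_real_affine[where c=1 and t="-y"])
         (auto simp add: one_ennreal_def[symmetric])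
    then show ?thesis by simp
  qed
  also have "\<dots> = (\<integral>\<^sup>+x. (\<integral>\<^sup>+y. f (x - y) * indicator A x \<partial>N) \<partial>lborel)"
    by (rule Fubini') measurable
  also have "\<dots> = emeasure ?r A"
    by (subst emeasure_density)
       (auto intro!: nn_integral_cong nn_integral_multc split: split_indicator)
  finally show "emeasure ?l A = emeasure ?r A" .
qed simp

lemma (in prob_space) distributed_convolution_left:
  fixes f :: "real \<Rightarrow> ennreal"
  assumes indep: "indep_var borel X borel Y"
    and X: "distributed M lborel X f"
    and [measurable]: "Y \<in> borel_measurable M"
  shows "distributed M lborel (\<lambda>\<omega>. X \<omega> + Y \<omega>) (\<lambda>t. \<integral>\<^sup>+\<omega>. f (t - Y \<omega>) \<partial>M)"
  unfolding distributed_def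
proof safe
  have [measurable]: "f \<in> borel_measurable borel" "X \<in> borel_measurable M"
    using distributed_borel_measurable[OF X] distributed_measurable[OF X] by simp_all
  have "distr M lborel (\<lambda>\<omega>. X \<omega> + Y \<omega>) = (distr M lborel X \<star> distr M lborel Y)"
    by (intro sum_indep_random_variable_lborel indep) auto
  also have "\<dots> = (density lborel f \<star> distr M lborel Y)"
    by (simp add: distributed_distr_eq_density[OF X])
  also have "\<dots> = density lborel (\<lambda>t. \<integral>\<^sup>+y. f (t - y) \<partial>distr M lborel Y)"
    by (intro convolution_density_left distributed_finite_measure_density[OF X]
        finite_measure_distr) auto
  also have "\<dots> = density lborel (\<lambda>t. \<integral>\<^sup>+\<omega>. f (t - Y \<omega>) \<partial>M)"
    by (intro density_cong) (auto simp: nn_integral_distr)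
  finally show "distr M lborel (\<lambda>\<omega>. X \<omega> + Y \<omega>) = density lborel (\<lambda>t. \<integral>\<^sup>+\<omega>. f (t - Y \<omega>) \<partial>M)" .
  show "(\<lambda>t. \<integral>\<^sup>+\<omega>. f (t - Y \<omega>) \<partial>M) \<in> borel_measurable lborel"
    using distributed_borel_measurable[OF X] by measurable
qed (use distributed_measurable[OF X] in simp)

lemma distributed_cong_AE:
  assumes "distributed M N X f" and "AE \<omega> in M. X \<omega> = Y \<omega>" and "Y \<in> measurable M N"
  shows "distributed M N Y f"
proof -
  have "distr M N Y = distr M N X"
    using assms distributed_measurable[OF assms(1)] by (intro distr_cong_AE) auto
  then show ?thesis
    using assms unfolding distributed_def by simp
qed

lemma exponential_density_le: "0 < l \<Longrightarrow> exponential_density l x \<le> l"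
  by (auto simp: exponential_density_def mult_le_cancel_left1)

lemma isCont_exponential_density: "0 < t \<Longrightarrow> isCont (exponential_density l) t"
proof -
  assume t: "0 < t"
  have "eventually (\<lambda>x. x \<in> {0<..}) (nhds t)"
    by (rule eventually_nhds_in_open) (use t in auto)
  then have "eventually (\<lambda>x. l * exp (- x * l) = exponential_density l x) (nhds t)"
    by eventually_elim (simp add: exponential_density_def)
  moreover have "isCont (\<lambda>x. l * exp (- x * l)) t"
    by (intro continuous_intros)
  ultimately show ?thesis
    using isCont_cong by force
qed

lemma integrable_exponential_density: "0 < l \<Longrightarrow> integrable lborel (exponential_density l)"
proof -
  assume l: "0 < l"
  interpret prob_space "density lborel (exponential_density l)"
    using prob_space_exponential_density[OF l] .
  have "(\<integral>\<^sup>+x. ennreal (exponential_density l x) \<partial>lborel) = 1"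
    using emeasure_space_1 by (simp add: emeasure_density)
  then show ?thesis
    using exponential_density_nonneg[OF l] by (intro integrableI_nonneg) auto
qed

lemma zero_if_isCont_vanishing_at_left:
  fixes f :: "real \<Rightarrow> real"
  assumes "isCont f 0" and "eventually (\<lambda>t. f t = 0) (at_left 0)"
  shows "f 0 = 0"
proof -
  have "(f \<longlongrightarrow> f 0) (at_left 0)"
    using assms(1) by (simp add: isCont_def filterlim_at_split)
  moreover have "(f \<longlongrightarrow> 0) (at_left 0)"
    using assms(2) by (rule tendsto_eventually)
  ultimately show ?thesis
    using tendsto_unique[OF trivial_limit_at_left_real] by blast
qed

lemma powser_coeffs_zero_if_vanishing_at_left:
  fixes c :: "nat \<Rightarrow> real"
  assumes r: "0 < r"
    and sums: "\<And>t. t \<in> ball 0 r \<Longrightarrow> (\<lambda>n. c n * t ^ n) sums f t"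
    and vanish: "\<And>t. - r < t \<Longrightarrow> t < 0 \<Longrightarrow> f t = 0"
  shows "c n = 0"
proof (induction n rule: less_induct)
  case (less n)
  have shifted: "(\<lambda>i. c (i + n) * t ^ i) sums (f t / t ^ n)"
    if t: "t \<in> ball 0 r" "t \<noteq> 0" for t
  proof -
    have "(\<lambda>i. c (i + n) * t ^ (i + n)) sums (f t - (\<Sum>i<n. c i * t ^ i))"
      by (rule sums_split_initial_segment[OF sums[OF t(1)]])
    then have "(\<lambda>i. c (i + n) * t ^ (i + n) / t ^ n) sums (f t / t ^ n)"
      using less.IH by (intro sums_divide) simp
    then show ?thesis
      using t(2) by (simp add: power_add)
  qed
  define h where "h t = (\<Sum>i. c (i + n) * t ^ i)" for t
  have "summable (\<lambda>i. c (i + n) * (r / 2) ^ i)"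
    using r by (intro sums_summable[OF shifted]) auto
  then have "isCont h 0"
    unfolding h_def[abs_def] by (rule isCont_powser) (use r in simp)
  moreover have "eventually (\<lambda>t. h t = 0) (at_left 0)"
  proof (rule eventually_at_leftI)
    fix t :: real assume t: "t \<in> {- r<..<0}"
    then have "t \<in> ball 0 r"
      by (auto simp: dist_real_def)
    then show "h t = 0"
      unfolding h_def using sums_unique[OF shifted] vanish t by fastforce
  qed (use r in simp)
  ultimately have "h 0 = 0"
    by (rule zero_if_isCont_vanishing_at_left)
  then show "c n = 0"
    unfolding h_def using powser_zero[of "\<lambda>i. c (i + n)"] by simp
qed

section \<open>Shift ratios under exponential convolution\<close>

text \<open>A multiplicative form of log-concavity of \<open>u\<close> on \<open>(0, \<infinity>)\<close>.\<close>

definition shift_ratio_mono :: "(real \<Rightarrow> real) \<Rightarrow> bool" where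
  "shift_ratio_mono u \<longleftrightarrow> (\<forall>w\<ge>0. mono_on {0<..} (\<lambda>t. u (t - w) / u t))"

lemma shift_ratio_monoD:
  "shift_ratio_mono u \<Longrightarrow> 0 \<le> w \<Longrightarrow> 0 < s \<Longrightarrow> s \<le> t \<Longrightarrow> u (s - w) / u s \<le> u (t - w) / u t"
  unfolding shift_ratio_mono_def by (auto intro: mono_onD)

lemma shift_ratio_mono_exponential_density:
  assumes l: "0 < l"
  shows "shift_ratio_mono (exponential_density l)"
  unfolding shift_ratio_mono_def
proof (intro allI impI mono_onI)
  fix w s t :: real
  assume "0 \<le> w" "s \<in> {0<..}" "t \<in> {0<..}" "s \<le> t"
  have ratio: "exponential_density l (t - w) / exponential_density l t
      = (if t < w then 0 else exp (w * l))" if "0 < t" for t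
  proof -
    have "exp (- (t - w) * l) / exp (- t * l) = exp (w * l)"
      by (simp add: exp_diff[symmetric] algebra_simps)
    then show ?thesis
      using that l by (simp add: exponential_density_def)
  qed
  show "exponential_density l (s - w) / exponential_density l s
      \<le> exponential_density l (t - w) / exponential_density l t"
    using \<open>s \<in> {0<..}\<close> \<open>t \<in> {0<..}\<close> \<open>s \<le> t\<close> by (simp add: ratio)
qed

lemma convolution_ratio_mono:
  fixes u v :: "real \<Rightarrow> real"
  assumes [measurable]: "u \<in> borel_measurable borel"
    and u_nonneg: "\<And>x. 0 \<le> u x" and u_le: "\<And>x. u x \<le> B"
    and u_pos: "\<And>x. 0 < x \<Longrightarrow> 0 < u x"
    and u_shift: "shift_ratio_mono u"
    and l: "0 < l"
    and v: "\<And>t. 0 < t \<Longrightarrow> v t = (\<integral>x. u (t - x) * exponential_density l x \<partial>lborel)"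
  shows "mono_on {0<..} (\<lambda>t. v t / u t)"
proof (rule mono_onI)
  fix s t :: real assume "s \<in> {0<..}" "t \<in> {0<..}" "s \<le> t"
  then have "0 < s" "0 < t" by simp_all
  have ratio: "v t / u t = (\<integral>x. u (t - x) / u t * exponential_density l x \<partial>lborel)"
    if "0 < t" for t
    using v[OF that] by (simp add: field_simps)
  have integrable: "integrable lborel (\<lambda>x. u (t - x) / u t * exponential_density l x)"
    if "0 < t" for t
  proof (rule Bochner_Integration.integrable_bound)
    show "integrable lborel (\<lambda>x. B / u t * exponential_density l x)"
      using integrable_exponential_density[OF l] by (rule integrable_mult_right)
    show "AE x in lborel. norm (u (t - x) / u t * exponential_density l x)
        \<le> norm (B / u t * exponential_density l x)"
    proof (rule AE_I2)
      fix x
      have "0 \<le> u (t - x) / u t * exponential_density l x"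
        "u (t - x) / u t * exponential_density l x \<le> B / u t * exponential_density l x"
        using u_nonneg u_le u_pos[OF that] exponential_density_nonneg[OF l]
        by (auto intro!: mult_right_mono divide_right_mono)
      then show "norm (u (t - x) / u t * exponential_density l x)
          \<le> norm (B / u t * exponential_density l x)"
        by (metis abs_of_nonneg abs_ge_self order_trans real_norm_def)
    qed
  qed simp
  have "(\<integral>x. u (s - x) / u s * exponential_density l x \<partial>lborel)
      \<le> (\<integral>x. u (t - x) / u t * exponential_density l x \<partial>lborel)"
  proof (rule integral_mono[OF integrable[OF \<open>0 < s\<close>] integrable[OF \<open>0 < t\<close>]])
    fix x :: real
    show "u (s - x) / u s * exponential_density l x \<le> u (t - x) / u t * exponential_density l x"
    proof (cases "x < 0")
      case False
      then show ?thesis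
        using u_shift \<open>0 < s\<close> \<open>s \<le> t\<close>
        by (intro mult_right_mono exponential_density_nonneg l shift_ratio_monoD) simp_all
    qed (simp add: exponential_density_def)
  qed
  then show "v s / u s \<le> v t / u t"
    unfolding ratio[OF \<open>0 < s\<close>] ratio[OF \<open>0 < t\<close>] .
qed

lemma increment_antimono_if_derivative_antimono:
  fixes f f' :: "real \<Rightarrow> real"
  assumes deriv: "\<And>x. 0 < x \<Longrightarrow> (f has_real_derivative f' x) (at x)"
    and antimono: "\<And>x y. 0 < x \<Longrightarrow> x \<le> y \<Longrightarrow> f' y \<le> f' x"
    and "0 \<le> w" "w < s" "s \<le> t"
  shows "f t - f (t - w) \<le> f s - f (s - w)"
proof (rule DERIV_nonpos_imp_nonincreasing[OF \<open>s \<le> t\<close>])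
  fix x assume "s \<le> x" "x \<le> t"
  then have "0 < x - w" "0 < x"
    using assms(3,4) by simp_all
  have "((\<lambda>x. x - w) has_real_derivative 1) (at x)"
    by (auto intro!: derivative_eq_intros)
  from DERIV_diff[OF deriv[OF \<open>0 < x\<close>] DERIV_chain2[OF deriv[OF \<open>0 < x - w\<close>] this]]
  have "((\<lambda>x. f x - f (x - w)) has_real_derivative f' x - f' (x - w)) (at x)"
    by simp
  moreover have "f' x - f' (x - w) \<le> 0"
    using antimono[OF \<open>0 < x - w\<close>] assms(3) by simp
  ultimately show "\<exists>y. ((\<lambda>x. f x - f (x - w)) has_real_derivative y) (at x) \<and> y \<le> 0"
    by blast
qed

lemma shift_ratio_mono_if_ratio_mono:
  fixes u v :: "real \<Rightarrow> real"
  assumes v_pos: "\<And>t. 0 < t \<Longrightarrow> 0 < v t" and v_nonpos: "\<And>t. t \<le> 0 \<Longrightarrow> v t = 0"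
    and u_pos: "\<And>t. 0 < t \<Longrightarrow> 0 < u t"
    and v_deriv: "\<And>t. 0 < t \<Longrightarrow> (v has_real_derivative l * (u t - v t)) (at t)"
    and ratio_mono: "mono_on {0<..} (\<lambda>t. v t / u t)"
    and l: "0 < l"
  shows "shift_ratio_mono v"
  unfolding shift_ratio_mono_def
proof (intro allI impI mono_onI)
  fix w s t :: real
  assume w: "0 \<le> w" and "s \<in> {0<..}" "t \<in> {0<..}" and "s \<le> t"
  then have "0 < s" by simp
  show "v (s - w) / v s \<le> v (t - w) / v t"
  proof (cases "s \<le> w")
    case True
    have "0 \<le> v (t - w)"
      using v_pos[of "t - w"] v_nonpos[of "t - w"] by force
    then show ?thesis
      using v_nonpos[of "s - w"] True v_pos[of t] \<open>0 < s\<close> \<open>s \<le> t\<close> by simp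
  next
    case False
    define r where "r x = l * (u x / v x - 1)" for x
    have "((\<lambda>x. ln (v x)) has_real_derivative r x) (at x)" if "0 < x" for x
    proof -
      have "((\<lambda>x. ln (v x)) has_real_derivative inverse (v x) * (l * (u x - v x))) (at x)"
        by (rule DERIV_chain2[OF DERIV_ln[OF v_pos[OF that]] v_deriv[OF that]])
      then show ?thesis
        unfolding r_def using v_pos[OF that] by (simp add: field_simps)
    qed
    moreover have "r y \<le> r x" if "0 < x" "x \<le> y" for x y
    proof -
      have "v x / u x \<le> v y / u y"
        using ratio_mono that by (auto intro: mono_onD)
      then have "u y / v y \<le> u x / v x"
        using v_pos u_pos that by (simp add: divide_le_eq le_divide_eq mult.commute)
      then show ?thesis
        unfolding r_def using l by simp
    qed
    ultimately have "ln (v t) - ln (v (t - w)) \<le> ln (v s) - ln (v (s - w))"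
      using w False \<open>s \<le> t\<close> by (intro increment_antimono_if_derivative_antimono) auto
    moreover have "v (x - w) / v x = exp (- (ln (v x) - ln (v (x - w))))" if "w < x" for x
      using v_pos[of x] v_pos[of "x - w"] that w by (simp add: exp_diff)
    ultimately show ?thesis
      using False \<open>s \<le> t\<close> by simp
  qed
qed

section \<open>Adding an independent exponential summand\<close>

context prob_space
begin

definition exp_conv_density :: "real \<Rightarrow> ('a \<Rightarrow> real) \<Rightarrow> real \<Rightarrow> real" where
  "exp_conv_density l Y t = expectation (\<lambda>\<omega>. exponential_density l (t - Y \<omega>))"

lemma integrable_exponential_density_diff:
  assumes [measurable]: "Y \<in> borel_measurable M" and l: "0 < l"
  shows "integrable M (\<lambda>\<omega>. exponential_density l (t - Y \<omega>))"
  by (rule integrable_const_bound[where B=l])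
     (use exponential_density_nonneg[OF l] exponential_density_le[OF l] in auto)

lemma exp_conv_density_nonneg: "0 < l \<Longrightarrow> 0 \<le> exp_conv_density l Y t"
  unfolding exp_conv_density_def by (intro integral_nonneg_AE) (simp add: exponential_density_nonneg)

lemma exp_conv_density_le:
  assumes "Y \<in> borel_measurable M" and l: "0 < l"
  shows "exp_conv_density l Y t \<le> l"
proof -
  have "exp_conv_density l Y t \<le> expectation (\<lambda>_. l)"
    unfolding exp_conv_density_def using exponential_density_le[OF l]
    by (intro integral_mono integrable_exponential_density_diff assms) auto
  then show ?thesis
    by (simp add: prob_space)
qed

lemma exp_conv_density_eq_0:
  assumes "AE \<omega> in M. 0 \<le> Y \<omega>" and "t < 0"
  shows "exp_conv_density l Y t = 0"
proof -
  have "AE \<omega> in M. exponential_density l (t - Y \<omega>) = 0"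
    using assms(1) by eventually_elim (use assms(2) in \<open>simp add: exponential_density_def\<close>)
  then show ?thesis
    unfolding exp_conv_density_def by (simp add: integral_eq_zero_AE)
qed

lemma exp_conv_density_pos:
  assumes [measurable]: "Y \<in> borel_measurable M" and l: "0 < l"
    and prob_pos: "0 < \<P>(\<omega> in M. Y \<omega> \<le> t)"
  shows "0 < exp_conv_density l Y t"
proof (rule ccontr)
  assume "\<not> 0 < exp_conv_density l Y t"
  then have "exp_conv_density l Y t = 0"
    using exp_conv_density_nonneg[OF l] by (simp add: order.antisym)
  then have "AE \<omega> in M. exponential_density l (t - Y \<omega>) = 0"
    unfolding exp_conv_density_def
    by (subst (asm) integral_nonneg_eq_0_iff_AE)
       (auto intro: integrable_exponential_density_diff l exponential_density_nonneg)
  then have "AE \<omega> in M. \<not> Y \<omega> \<le> t"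
    by eventually_elim (use l in \<open>auto simp: exponential_density_def\<close>)
  then have "\<P>(\<omega> in M. Y \<omega> \<le> t) = 0"
    by (rule prob_eq_0_AE)
  with prob_pos show False
    by simp
qed

lemma borel_measurable_exp_conv_density:
  assumes [measurable]: "Y \<in> borel_measurable M"
  shows "exp_conv_density l Y \<in> borel_measurable borel"
  unfolding exp_conv_density_def by measurable

lemma distributed_add_exponential:
  assumes indep: "indep_var borel X borel Y"
    and X: "distributed M lborel X (\<lambda>x. ennreal (exponential_density l x))"
    and [measurable]: "Y \<in> borel_measurable M" and l: "0 < l"
  shows "distributed M lborel (\<lambda>\<omega>. X \<omega> + Y \<omega>) (\<lambda>t. ennreal (exp_conv_density l Y t))"
proof -
  have "(\<integral>\<^sup>+\<omega>. ennreal (exponential_density l (t - Y \<omega>)) \<partial>M) = ennreal (exp_conv_density l Y t)"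
    for t
    unfolding exp_conv_density_def
    by (intro nn_integral_eq_integral integrable_exponential_density_diff l)
       (simp_all add: exponential_density_nonneg[OF l])
  then show ?thesis
    using distributed_convolution_left[OF indep X] by simp
qed

lemma exp_conv_density_eq_convolution:
  assumes Y: "distributed M lborel Y (\<lambda>x. ennreal (u x))" and u_nonneg: "\<And>x. 0 \<le> u x"
  shows "exp_conv_density l Y t = (\<integral>x. u (t - x) * exponential_density l x \<partial>lborel)"
proof -
  have "exp_conv_density l Y t = (\<integral>y. u y * exponential_density l (t - y) \<partial>lborel)"
    unfolding exp_conv_density_def
    by (rule distributed_integral[OF Y, symmetric]) (auto simp: u_nonneg)
  also have "\<dots> = \<bar>-1\<bar> *\<^sub>R (\<integral>x. u (t + (-1) * x) * exponential_density l (t - (t + (-1) * x)) \<partial>lborel)"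
    by (rule lborel_integral_real_affine) simp
  finally show ?thesis
    by simp
qed

context
  fixes Y :: "'a \<Rightarrow> real" and u :: "real \<Rightarrow> real" and B l :: real
  assumes distributed_Y: "distributed M lborel Y (\<lambda>x. ennreal (u x))"
    and u_measurable [measurable]: "u \<in> borel_measurable borel"
    and u_nonneg: "\<And>x. 0 \<le> u x" and u_le: "\<And>x. u x \<le> B"
    and u_neg: "\<And>x. x < 0 \<Longrightarrow> u x = 0"
    and l_pos: "0 < l"
begin

lemma set_integrable_exp_weighted_density: "set_integrable lborel {a..b} (\<lambda>y. exp (l * y) * u y)"
  unfolding set_integrable_def
proof (rule Bochner_Integration.integrable_bound)
  show "integrable lborel (\<lambda>y. indicator {a..b} y * (exp (l * b) * B))"
    by (intro integrable_mult_left integrable_real_indicator) (auto simp: emeasure_lborel_Icc_eq)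
  have "\<bar>exp (l * y) * u y\<bar> \<le> exp (l * b) * B" if "y \<in> {a..b}" for y
  proof -
    have "exp (l * y) \<le> exp (l * b)"
      using that l_pos by simp
    then show ?thesis
      using u_nonneg[of y] u_le[of y] by (simp add: abs_mult mult_mono)
  qed
  then show "AE y in lborel. norm (indicator {a..b} y *\<^sub>R (exp (l * y) * u y))
      \<le> norm (indicator {a..b} y * (exp (l * b) * B))"
    by (intro AE_I2) (auto simp: indicator_def intro: order_trans[OF _ abs_ge_self])
qed simp

lemma exp_conv_density_eq_integral:
  assumes a: "a \<le> 0" "a \<le> t"
  shows "exp_conv_density l Y t = l * exp (- t * l) * integral {a..t} (\<lambda>y. exp (l * y) * u y)"
proof -
  have "exp_conv_density l Y t = (\<integral>y. u y * exponential_density l (t - y) \<partial>lborel)"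
    unfolding exp_conv_density_def
    by (rule distributed_integral[OF distributed_Y, symmetric]) (auto simp: u_nonneg)
  also have "\<dots> = (\<integral>y. l * exp (- t * l) * (indicator {a..t} y * (exp (l * y) * u y)) \<partial>lborel)"
  proof (intro Bochner_Integration.integral_cong refl)
    fix y
    have "exp (- (t - y) * l) = exp (- t * l) * exp (l * y)"
      by (simp add: exp_add[symmetric] algebra_simps)
    then show "u y * exponential_density l (t - y)
        = l * exp (- t * l) * (indicator {a..t} y * (exp (l * y) * u y))"
      using u_neg[of y] a by (auto simp: exponential_density_def indicator_def)
  qed
  also have "\<dots> = l * exp (- t * l) * (LINT y:{a..t}|lborel. exp (l * y) * u y)"
    by (simp add: set_lebesgue_integral_def)
  also have "\<dots> = l * exp (- t * l) * integral {a..t} (\<lambda>y. exp (l * y) * u y)"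
    by (simp add: set_borel_integral_eq_integral(2)[OF set_integrable_exp_weighted_density])
  finally show ?thesis .
qed

lemma isCont_exp_conv_density: "isCont (exp_conv_density l Y) t"
proof -
  define a where "a = - \<bar>t\<bar> - 1"
  have a: "a < t" "a \<le> 0"
    unfolding a_def by auto
  define H where "H x = l * exp (- x * l) * integral {a..x} (\<lambda>y. exp (l * y) * u y)" for x
  have "continuous_on {a..\<bar>t\<bar> + 1} (\<lambda>x. integral {a..x} (\<lambda>y. exp (l * y) * u y))"
    by (intro indefinite_integral_continuous_1 set_borel_integral_eq_integral(1)
        set_integrable_exp_weighted_density)
  then have "isCont H t"
    unfolding H_def using a
    by (intro continuous_intros continuous_on_interior[where S="{a..\<bar>t\<bar> + 1}"]) auto
  moreover have "exp_conv_density l Y x = H x" if "a < x" for x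
    unfolding H_def using that a by (intro exp_conv_density_eq_integral) auto
  then have "eventually (\<lambda>x. exp_conv_density l Y x = H x) (nhds t)"
    using eventually_nhds_in_open[of "{a<..}" t] a by (auto elim!: eventually_mono)
  ultimately show ?thesis
    using isCont_cong by blast
qed

lemma exp_conv_density_has_derivative:
  assumes "isCont u t"
  shows "(exp_conv_density l Y has_real_derivative l * (u t - exp_conv_density l Y t)) (at t)"
proof -
  define a where "a = - \<bar>t\<bar> - 1"
  have a: "a < t" "a \<le> 0"
    unfolding a_def by auto
  define f where "f y = exp (l * y) * u y" for y
  define H where "H x = l * exp (- x * l) * integral {a..x} f" for x
  have H_eq: "exp_conv_density l Y x = H x" if "a < x" for x
    unfolding H_def f_def using that a by (intro exp_conv_density_eq_integral) auto
  have "((\<lambda>x. integral {a..x} f) has_vector_derivative f t) (at t within {a..\<bar>t\<bar> + 1})"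
    unfolding f_def using a assms
    by (intro integral_has_vector_derivative_continuous_at[where S="{}", simplified]
        set_borel_integral_eq_integral(1) set_integrable_exp_weighted_density continuous_intros)
       (auto intro: continuous_at_imp_continuous_within)
  then have "((\<lambda>x. integral {a..x} f) has_real_derivative f t) (at t)"
    using a by (simp add: has_real_derivative_iff_has_vector_derivative at_within_Icc_at)
  then have "(H has_real_derivative
      l * (exp (- t * l) * (- l)) * integral {a..t} f + l * exp (- t * l) * f t) (at t)"
    unfolding H_def by (auto intro!: derivative_eq_intros)
  moreover have "l * (exp (- t * l) * (- l)) * integral {a..t} f + l * exp (- t * l) * f t
      = l * (u t - H t)"
  proof -
    have "exp (- t * l) * exp (l * t) = 1"
      by (simp add: exp_add[symmetric])
    then show ?thesis
      unfolding H_def f_def by (simp add: algebra_simps)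
  qed
  ultimately have "(H has_real_derivative l * (u t - exp_conv_density l Y t)) (at t)"
    using H_eq[OF \<open>a < t\<close>] by simp
  then show ?thesis
    by (rule has_field_derivative_transform_within_open[where S="{a<..}"]) (use a H_eq in auto)
qed

end

end

section \<open>Tails of the series of holding times\<close>

locale birth_process = prob_space M for M :: "'a measure" +
  fixes F :: "nat \<Rightarrow> real" and n0 :: nat and \<tau> :: "nat \<Rightarrow> 'a \<Rightarrow> real"
  assumes F_pos: "\<And>k. k \<ge> 1 \<Longrightarrow> F k > 0"
    and F_sum: "summable (\<lambda>k. 1 / F (Suc k))"
    and n0: "n0 \<ge> 1"
    and indep: "indep_vars (\<lambda>_. borel) \<tau> {n0..}"
    and expo: "\<And>k. k \<ge> n0 \<Longrightarrow>
                 distributed M lborel (\<tau> k) (\<lambda>x. ennreal (exponential_density (F k) x))"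
begin

text \<open>States are counted from \<open>n0\<close>: \<open>wait k\<close> is the holding time in state \<open>k + n0\<close>, \<open>tail j\<close>
  the time to explosion after reaching state \<open>j + n0\<close>, and \<open>dens j\<close> its density.\<close>

definition rate :: "nat \<Rightarrow> real" where "rate k = F (k + n0)"
definition wait :: "nat \<Rightarrow> 'a \<Rightarrow> real" where "wait k = \<tau> (k + n0)"
definition tail :: "nat \<Rightarrow> 'a \<Rightarrow> real" where "tail j \<omega> = (\<Sum>k. wait (k + j) \<omega>)"
definition segment :: "nat \<Rightarrow> nat \<Rightarrow> 'a \<Rightarrow> real" where
  "segment j N \<omega> = (\<Sum>k\<in>{j..<N}. wait k \<omega>)"
definition dens :: "nat \<Rightarrow> real \<Rightarrow> real" where
  "dens j = exp_conv_density (rate j) (tail (Suc j))"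
definition segment_dens :: "nat \<Rightarrow> nat \<Rightarrow> real \<Rightarrow> real" where
  "segment_dens j N = exp_conv_density (rate j) (segment (Suc j) N)"
definition regular :: "'a \<Rightarrow> bool" where
  "regular \<omega> \<longleftrightarrow> (\<forall>k. 0 \<le> wait k \<omega>) \<and> summable (\<lambda>k. wait k \<omega>)"

lemma rate_pos: "0 < rate k"
  unfolding rate_def using F_pos n0 by simp

lemma summable_inverse_rate: "summable (\<lambda>k. 1 / rate k)"
proof -
  have "summable (\<lambda>k. 1 / F (Suc (k + (n0 - 1))))"
    using F_sum summable_iff_shift[of "\<lambda>k. 1 / F (Suc k)" "n0 - 1"] by simp
  moreover have "Suc (k + (n0 - 1)) = k + n0" for k
    using n0 by simp
  ultimately show ?thesis
    unfolding rate_def by simp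
qed

lemma distributed_wait: "distributed M lborel (wait k) (\<lambda>x. ennreal (exponential_density (rate k) x))"
  unfolding wait_def rate_def using expo[of "k + n0"] by simp

lemma tau_measurable[measurable]: "n0 \<le> i \<Longrightarrow> \<tau> i \<in> borel_measurable M"
  using distributed_measurable[OF expo[of i]] by simp

lemma wait_measurable[measurable]: "wait k \<in> borel_measurable M"
  unfolding wait_def by simp

lemma tail_measurable[measurable]: "tail j \<in> borel_measurable M"
  unfolding tail_def by measurable

lemma segment_measurable[measurable]: "segment j N \<in> borel_measurable M"
  unfolding segment_def by measurable

lemma AE_wait_nonneg: "AE \<omega> in M. 0 \<le> wait k \<omega>"
proof -
  have "AE x in lborel. 0 < ennreal (exponential_density (rate k) x) \<longrightarrow> 0 \<le> x"
    by (auto simp: exponential_density_def)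
  then show ?thesis
    by (subst distributed_AE2[OF distributed_wait]) simp_all
qed

lemma nn_integral_wait: "(\<integral>\<^sup>+\<omega>. ennreal (wait k \<omega>) \<partial>M) = ennreal (1 / rate k)"
proof -
  have "integrable M (\<lambda>\<omega>. wait k \<omega> ^ 1)"
    by (rule erlang_ith_moment_integrable[OF rate_pos distributed_wait])
  moreover have "expectation (wait k) = 1 / rate k"
    using exponential_distributed_expectation[OF rate_pos distributed_wait] by simp
  ultimately show ?thesis
    using nn_integral_eq_integral[of M "wait k"] AE_wait_nonneg[of k] by simp
qed

text \<open>Explosion is almost sure because the expected explosion time \<open>\<Sum>k. 1 / rate k\<close> is finite.\<close>

lemma AE_regular: "AE \<omega> in M. regular \<omega>"
proof -
  have "(\<integral>\<^sup>+\<omega>. (\<Sum>k. ennreal (wait k \<omega>)) \<partial>M) = (\<Sum>k. \<integral>\<^sup>+\<omega>. ennreal (wait k \<omega>) \<partial>M)"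
    by (rule nn_integral_suminf) simp
  also have "\<dots> = ennreal (\<Sum>k. 1 / rate k)"
    using summable_inverse_rate rate_pos
    by (simp add: nn_integral_wait suminf_ennreal2 less_imp_le)
  finally have "AE \<omega> in M. (\<Sum>k. ennreal (wait k \<omega>)) \<noteq> \<infinity>"
    by (intro nn_integral_noteq_infinite) simp_all
  moreover have "AE \<omega> in M. \<forall>k. 0 \<le> wait k \<omega>"
    using AE_wait_nonneg by (simp add: AE_all_countable)
  ultimately show ?thesis
    unfolding regular_def by eventually_elim (auto intro: summable_suminf_not_top)
qed

lemma indep_wait_future:
  assumes \<Phi>: "\<Phi> \<in> borel_measurable (PiM {j + n0<..} (\<lambda>_. borel))"
  shows "indep_var borel (wait j) borel (\<lambda>\<omega>. \<Phi> (\<lambda>i\<in>{j + n0<..}. \<tau> i \<omega>))"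
proof -
  have "indep_var (PiM {j + n0} (\<lambda>_. borel)) (\<lambda>\<omega>. \<lambda>i\<in>{j + n0}. \<tau> i \<omega>)
      (PiM {j + n0<..} (\<lambda>_. borel)) (\<lambda>\<omega>. \<lambda>i\<in>{j + n0<..}. \<tau> i \<omega>)"
    by (rule indep_var_restrict[OF indep]) auto
  then have "indep_var borel ((\<lambda>f. f (j + n0)) \<circ> (\<lambda>\<omega>. \<lambda>i\<in>{j + n0}. \<tau> i \<omega>))
      borel (\<Phi> \<circ> (\<lambda>\<omega>. \<lambda>i\<in>{j + n0<..}. \<tau> i \<omega>))"
    by (rule indep_var_compose) (auto simp: \<Phi>)
  moreover have "(\<lambda>f. f (j + n0)) \<circ> (\<lambda>\<omega>. \<lambda>i\<in>{j + n0}. \<tau> i \<omega>) = wait j"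
    by (auto simp: wait_def fun_eq_iff add.commute)
  ultimately show ?thesis
    by (simp add: comp_def)
qed

lemma indep_wait_tail: "indep_var borel (wait j) borel (tail (Suc j))"
proof -
  have "(\<lambda>h. \<Sum>k. h (k + Suc j + n0)) \<in> borel_measurable (PiM {j + n0<..} (\<lambda>_. borel :: real measure))"
    by (intro borel_measurable_suminf measurable_component_singleton) auto
  from indep_wait_future[OF this] show ?thesis
    by (simp add: tail_def[abs_def] wait_def ac_simps)
qed

lemma indep_wait_segment: "indep_var borel (wait j) borel (segment (Suc j) N)"
proof -
  have "(\<lambda>h. \<Sum>k\<in>{Suc j..<N}. h (k + n0)) \<in> borel_measurable (PiM {j + n0<..} (\<lambda>_. borel :: real measure))"
    by (intro borel_measurable_sum measurable_component_singleton) auto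
  from indep_wait_future[OF this] show ?thesis
    by (simp add: segment_def[abs_def] wait_def ac_simps)
qed

lemma summable_wait_shift: "regular \<omega> \<Longrightarrow> summable (\<lambda>k. wait (k + j) \<omega>)"
  unfolding regular_def using summable_iff_shift[of "\<lambda>k. wait k \<omega>" j] by simp

lemma tail_Suc: "regular \<omega> \<Longrightarrow> tail j \<omega> = wait j \<omega> + tail (Suc j) \<omega>"
  unfolding tail_def using suminf_split_head[OF summable_wait_shift] by simp

lemma tail_nonneg: "regular \<omega> \<Longrightarrow> 0 \<le> tail j \<omega>"
  unfolding tail_def using summable_wait_shift by (intro suminf_nonneg) (auto simp: regular_def)

lemma tail_tendsto_0: "regular \<omega> \<Longrightarrow> (\<lambda>j. tail j \<omega>) \<longlonglongrightarrow> 0"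
  unfolding tail_def regular_def by (intro suminf_exist_split2) simp

lemma segment_Suc: "j < N \<Longrightarrow> segment j N \<omega> = wait j \<omega> + segment (Suc j) N \<omega>"
  unfolding segment_def by (simp add: sum.atLeast_Suc_lessThan)

lemma segment_nonneg: "regular \<omega> \<Longrightarrow> 0 \<le> segment j N \<omega>"
  unfolding segment_def regular_def by (intro sum_nonneg) auto

lemma segment_add: "segment j (n + j) \<omega> = (\<Sum>k<n. wait (k + j) \<omega>)"
  unfolding segment_def using sum.shift_bounds_nat_ivl[of "\<lambda>k. wait k \<omega>" 0 j n]
  by (simp add: atLeast0LessThan)

lemma segment_tendsto_tail:
  assumes "regular \<omega>"
  shows "(\<lambda>N. segment j N \<omega>) \<longlonglongrightarrow> tail j \<omega>"
proof (rule LIMSEQ_offset[of _ j])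
  show "(\<lambda>n. segment j (n + j) \<omega>) \<longlonglongrightarrow> tail j \<omega>"
    unfolding segment_add tail_def by (rule summable_LIMSEQ[OF summable_wait_shift[OF assms]])
qed

lemma segment_le_tail:
  assumes \<omega>: "regular \<omega>"
  shows "segment j N \<omega> \<le> tail j \<omega>"
proof (cases "j \<le> N")
  case True
  then have "segment j N \<omega> = (\<Sum>k<N - j. wait (k + j) \<omega>)"
    using segment_add[of j "N - j"] by simp
  also have "\<dots> \<le> tail j \<omega>"
    unfolding tail_def using \<omega>
    using sum_le_suminf[OF summable_wait_shift[OF \<omega>], of "{..<N - j}"]
    by (simp add: regular_def)
  finally show ?thesis .
next
  case False
  then show ?thesis
    using tail_nonneg[OF \<omega>] by (simp add: segment_def)
qed

lemma distributed_tail: "distributed M lborel (tail j) (\<lambda>t. ennreal (dens j t))"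
proof (rule distributed_cong_AE)
  show "distributed M lborel (\<lambda>\<omega>. wait j \<omega> + tail (Suc j) \<omega>) (\<lambda>t. ennreal (dens j t))"
    unfolding dens_def
    by (intro distributed_add_exponential indep_wait_tail distributed_wait rate_pos) simp
  show "AE \<omega> in M. wait j \<omega> + tail (Suc j) \<omega> = tail j \<omega>"
    using AE_regular by eventually_elim (rule tail_Suc[symmetric])
qed simp

lemma distributed_segment:
  assumes "j < N"
  shows "distributed M lborel (segment j N) (\<lambda>t. ennreal (segment_dens j N t))"
proof -
  have "distributed M lborel (\<lambda>\<omega>. wait j \<omega> + segment (Suc j) N \<omega>) (\<lambda>t. ennreal (segment_dens j N t))"
    unfolding segment_dens_def
    by (intro distributed_add_exponential indep_wait_segment distributed_wait rate_pos) simp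
  moreover have "(\<lambda>\<omega>. wait j \<omega> + segment (Suc j) N \<omega>) = segment j N"
    using segment_Suc[OF assms] by auto
  ultimately show ?thesis
    by simp
qed

lemma dens_nonneg: "0 \<le> dens j t"
  unfolding dens_def by (intro exp_conv_density_nonneg rate_pos)

lemma segment_dens_nonneg: "0 \<le> segment_dens j N t"
  unfolding segment_dens_def by (intro exp_conv_density_nonneg rate_pos)

lemma dens_le: "dens j t \<le> rate j"
  unfolding dens_def by (intro exp_conv_density_le rate_pos) simp

lemma segment_dens_le: "segment_dens j N t \<le> rate j"
  unfolding segment_dens_def by (intro exp_conv_density_le rate_pos) simp

lemma dens_eq_0: "t < 0 \<Longrightarrow> dens j t = 0"
  unfolding dens_def using AE_regular
  by (intro exp_conv_density_eq_0) (auto elim!: eventually_mono simp: tail_nonneg)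

lemma segment_dens_eq_0: "t < 0 \<Longrightarrow> segment_dens j N t = 0"
  unfolding segment_dens_def using AE_regular
  by (intro exp_conv_density_eq_0) (auto elim!: eventually_mono simp: segment_nonneg)

lemma dens_measurable[measurable]: "dens j \<in> borel_measurable borel"
  unfolding dens_def by (intro borel_measurable_exp_conv_density) simp

lemma segment_dens_measurable[measurable]: "segment_dens j N \<in> borel_measurable borel"
  unfolding segment_dens_def by (intro borel_measurable_exp_conv_density) simp

lemma isCont_dens: "isCont (dens j) t"
  unfolding dens_def
  by (rule isCont_exp_conv_density[OF distributed_tail dens_measurable dens_nonneg dens_le dens_eq_0
        rate_pos])

lemma dens_has_derivative: "(dens j has_real_derivative rate j * (dens (Suc j) t - dens j t)) (at t)"
  unfolding dens_def[of j]
  by (rule exp_conv_density_has_derivative[OF distributed_tail dens_measurable dens_nonneg dens_le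
        dens_eq_0 rate_pos isCont_dens, folded dens_def])

lemma dens_0: "dens j 0 = 0"
  by (rule zero_if_isCont_vanishing_at_left[OF isCont_dens eventually_at_leftI[of "-1"]])
     (simp_all add: dens_eq_0)

fun dens_deriv :: "nat \<Rightarrow> nat \<Rightarrow> real \<Rightarrow> real" where
  "dens_deriv 0 j = dens j"
| "dens_deriv (Suc k) j = (\<lambda>t. rate j * (dens_deriv k (Suc j) t - dens_deriv k j t))"

lemma dens_deriv_has_derivative: "(dens_deriv k j has_real_derivative dens_deriv (Suc k) j t) (at t)"
proof (induction k arbitrary: j)
  case 0
  show ?case
    using dens_has_derivative by simp
next
  case (Suc k)
  show ?case
    using DERIV_cmult[OF DERIV_diff[OF Suc.IH Suc.IH], of "rate j"] by simp
qed

lemma dens_deriv_0: "dens_deriv k j 0 = 0"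
  by (induction k arbitrary: j) (simp_all add: dens_0)

lemma prob_tail_le_Suc:
  assumes pos: "0 < \<P>(\<omega> in M. tail (Suc k) \<omega> \<le> s)" and "s < s'"
  shows "0 < \<P>(\<omega> in M. tail k \<omega> \<le> s')"
proof -
  have "0 < \<P>(\<omega> in M. wait k \<omega> \<le> s' - s)"
    using exponential_distributedD_le[OF distributed_wait, of "s' - s"] rate_pos[of k] \<open>s < s'\<close>
    by (simp add: mult_neg_pos)
  then have "0 < \<P>(\<omega> in M. wait k \<omega> \<in> {..s' - s}) * \<P>(\<omega> in M. tail (Suc k) \<omega> \<in> {..s})"
    using pos by simp
  also have "\<dots> = \<P>(\<omega> in M. wait k \<omega> \<in> {..s' - s} \<and> tail (Suc k) \<omega> \<in> {..s})"
    by (rule prob_indep_random_variable[OF indep_wait_tail, symmetric]) auto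
  also have "\<dots> \<le> \<P>(\<omega> in M. tail k \<omega> \<le> s')"
    using AE_regular
    by (intro finite_measure_mono_AE) (auto elim!: eventually_mono simp: tail_Suc[of _ k])
  finally show ?thesis .
qed

lemma prob_tail_le_pos_if_later:
  "0 < \<P>(\<omega> in M. tail (n + k) \<omega> \<le> s) \<Longrightarrow> s < s' \<Longrightarrow> 0 < \<P>(\<omega> in M. tail k \<omega> \<le> s')"
proof (induction n arbitrary: k s')
  case 0
  have "\<P>(\<omega> in M. tail k \<omega> \<le> s) \<le> \<P>(\<omega> in M. tail k \<omega> \<le> s')"
    using 0 by (intro finite_measure_mono) auto
  with 0 show ?case
    by simp
next
  case (Suc n)
  then have "0 < \<P>(\<omega> in M. tail (Suc k) \<omega> \<le> (s + s') / 2)"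
    by (intro Suc.IH[of "Suc k"]) simp_all
  then show ?case
    by (rule prob_tail_le_Suc) (use Suc.prems in simp)
qed

lemma prob_tail_le_tendsto_1:
  assumes "0 < s"
  shows "(\<lambda>k. \<P>(\<omega> in M. tail k \<omega> \<le> s)) \<longlonglongrightarrow> 1"
proof -
  have [simp]: "{\<omega>\<in>space M. tail k \<omega> \<le> s} \<in> events" for k
    by measurable
  have lim: "AE \<omega> in M. (\<lambda>k. indicator {\<omega>\<in>space M. tail k \<omega> \<le> s} \<omega>) \<longlonglongrightarrow> (1::real)"
    using AE_regular AE_space
  proof eventually_elim
    case (elim \<omega>)
    have "eventually (\<lambda>k. tail k \<omega> < s) sequentially"
      using tail_tendsto_0[OF elim(1)] assms by (rule order_tendstoD)
    then have "eventually (\<lambda>k. indicator {\<omega>\<in>space M. tail k \<omega> \<le> s} \<omega> = (1::real)) sequentially"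
      by eventually_elim (use elim(2) in auto)
    then show ?case
      by (rule tendsto_eventually)
  qed
  have "(\<lambda>k. \<integral>\<omega>. indicator {\<omega>\<in>space M. tail k \<omega> \<le> s} \<omega> \<partial>M) \<longlonglongrightarrow> (\<integral>\<omega>. (1::real) \<partial>M)"
    by (rule Bochner_Integration.integral_dominated_convergence[where w="\<lambda>_. 1", OF _ _ _ lim])
       (auto simp: indicator_def)
  then show ?thesis
    by (simp add: prob_space)
qed

lemma prob_tail_le_pos:
  assumes "0 < s"
  shows "0 < \<P>(\<omega> in M. tail k \<omega> \<le> s)"
proof -
  have "(\<lambda>n. \<P>(\<omega> in M. tail n \<omega> \<le> s / 2)) \<longlonglongrightarrow> 1"
    using assms by (intro prob_tail_le_tendsto_1) simp
  then have "eventually (\<lambda>n. 0 < \<P>(\<omega> in M. tail n \<omega> \<le> s / 2)) sequentially"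
    by (rule order_tendstoD) simp
  then obtain n where "0 < \<P>(\<omega> in M. tail (n + k) \<omega> \<le> s / 2)"
    unfolding eventually_sequentially by (metis le_add1)
  then show ?thesis
    by (rule prob_tail_le_pos_if_later) (use assms in simp)
qed

lemma dens_pos: "0 < t \<Longrightarrow> 0 < dens j t"
  unfolding dens_def by (intro exp_conv_density_pos tail_measurable rate_pos prob_tail_le_pos)

lemma segment_dens_pos: "0 < t \<Longrightarrow> 0 < segment_dens j N t"
  unfolding segment_dens_def
proof (intro exp_conv_density_pos segment_measurable rate_pos)
  assume "0 < t"
  have "\<P>(\<omega> in M. tail (Suc j) \<omega> \<le> t) \<le> \<P>(\<omega> in M. segment (Suc j) N \<omega> \<le> t)"
    using AE_regular
    by (intro finite_measure_mono_AE) (auto elim!: eventually_mono intro: order_trans[OF segment_le_tail])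
  then show "0 < \<P>(\<omega> in M. segment (Suc j) N \<omega> \<le> t)"
    using prob_tail_le_pos[OF \<open>0 < t\<close>, of "Suc j"] by linarith
qed

section \<open>Monotonicity of the ratio of consecutive densities\<close>

lemma segment_dens_last: "segment_dens j (Suc j) = exponential_density (rate j)"
  unfolding segment_dens_def exp_conv_density_def segment_def by (simp add: prob_space fun_eq_iff)

lemma isCont_segment_dens:
  assumes "j < N" and "0 < t"
  shows "isCont (segment_dens j N) t"
proof (cases "Suc j < N")
  case True
  then show ?thesis
    unfolding segment_dens_def
    by (intro isCont_exp_conv_density[OF distributed_segment segment_dens_measurable
          segment_dens_nonneg segment_dens_le segment_dens_eq_0 rate_pos])
next
  case False
  then have "N = Suc j"
    using assms(1) by simp
  then show ?thesis
    using isCont_exponential_density[OF assms(2)] by (simp add: segment_dens_last)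
qed

lemma segment_dens_has_derivative:
  assumes "Suc j < N" and "0 < t"
  shows "(segment_dens j N has_real_derivative
      rate j * (segment_dens (Suc j) N t - segment_dens j N t)) (at t)"
  unfolding segment_dens_def[of j]
  by (rule exp_conv_density_has_derivative[OF distributed_segment[OF assms(1)] segment_dens_measurable
        segment_dens_nonneg segment_dens_le segment_dens_eq_0 rate_pos
        isCont_segment_dens[OF assms], folded segment_dens_def])

lemma segment_dens_0:
  assumes "Suc j < N"
  shows "segment_dens j N 0 = 0"
proof (rule zero_if_isCont_vanishing_at_left[OF _ eventually_at_leftI[of "-1"]])
  show "isCont (segment_dens j N) 0"
    unfolding segment_dens_def
    by (intro isCont_exp_conv_density[OF distributed_segment[OF assms] segment_dens_measurable
          segment_dens_nonneg segment_dens_le segment_dens_eq_0 rate_pos])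
qed (simp_all add: segment_dens_eq_0)

lemma segment_dens_eq_convolution:
  assumes "Suc j < N"
  shows "segment_dens j N t
    = (\<integral>x. segment_dens (Suc j) N (t - x) * exponential_density (rate j) x \<partial>lborel)"
  unfolding segment_dens_def[of j]
  by (rule exp_conv_density_eq_convolution[OF distributed_segment[OF assms] segment_dens_nonneg,
        folded segment_dens_def])

lemma segment_dens_ratio_mono:
  assumes "Suc j < N" and "shift_ratio_mono (segment_dens (Suc j) N)"
  shows "mono_on {0<..} (\<lambda>t. segment_dens j N t / segment_dens (Suc j) N t)"
  by (rule convolution_ratio_mono[OF segment_dens_measurable segment_dens_nonneg segment_dens_le
        segment_dens_pos assms(2) rate_pos segment_dens_eq_convolution[OF assms(1)]])

lemma shift_ratio_mono_segment_dens:
  assumes "j < N"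
  shows "shift_ratio_mono (segment_dens j N)"
proof -
  have "j \<le> N - 1"
    using assms by simp
  then show ?thesis
  proof (induction j rule: inc_induct)
    case base
    have "Suc (N - 1) = N"
      using assms by simp
    then show ?case
      using segment_dens_last[of "N - 1"] shift_ratio_mono_exponential_density[OF rate_pos] by simp
  next
    case (step j)
    then have j: "Suc j < N"
      by simp
    show ?case
    proof (rule shift_ratio_mono_if_ratio_mono)
      show "segment_dens j N t = 0" if "t \<le> 0" for t
        using segment_dens_eq_0[of t] segment_dens_0[OF j] that by (cases "t = 0") auto
      show "(segment_dens j N has_real_derivative
          rate j * (segment_dens (Suc j) N t - segment_dens j N t)) (at t)" if "0 < t" for t
        by (rule segment_dens_has_derivative[OF j that])
      show "mono_on {0<..} (\<lambda>t. segment_dens j N t / segment_dens (Suc j) N t)"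
        by (rule segment_dens_ratio_mono[OF j step.IH])
    qed (simp_all add: segment_dens_pos rate_pos)
  qed
qed

lemma segment_dens_tendsto_dens: "(\<lambda>N. segment_dens j N t) \<longlonglongrightarrow> dens j t"
proof -
  define l where "l = rate j"
  have l: "0 < l"
    unfolding l_def by (rule rate_pos)
  have lim: "AE \<omega> in M. (\<lambda>N. exponential_density l (t - segment (Suc j) N \<omega>))
      \<longlonglongrightarrow> exponential_density l (t - tail (Suc j) \<omega>)"
    using AE_regular
  proof eventually_elim
    case (elim \<omega>)
    note lim = segment_tendsto_tail[OF elim, of "Suc j"]
    show ?case
    proof (cases "t < tail (Suc j) \<omega>")
      case True
      have "eventually (\<lambda>N. t < segment (Suc j) N \<omega>) sequentially"
        using lim True by (rule order_tendstoD)
      then have "eventually (\<lambda>N. exponential_density l (t - segment (Suc j) N \<omega>)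
          = exponential_density l (t - tail (Suc j) \<omega>)) sequentially"
        by eventually_elim (use True in \<open>simp add: exponential_density_def\<close>)
      then show ?thesis
        by (rule tendsto_eventually)
    next
      case False
      have "exponential_density l (t - segment (Suc j) N \<omega>) = l * exp (- (t - segment (Suc j) N \<omega>) * l)"
        for N
        using False segment_le_tail[OF elim, of "Suc j" N] by (simp add: exponential_density_def)
      moreover have "(\<lambda>N. l * exp (- (t - segment (Suc j) N \<omega>) * l))
          \<longlonglongrightarrow> l * exp (- (t - tail (Suc j) \<omega>) * l)"
        by (intro tendsto_intros lim)
      ultimately show ?thesis
        using False by (simp add: exponential_density_def)
    qed
  qed
  have "(\<lambda>N. \<integral>\<omega>. exponential_density l (t - segment (Suc j) N \<omega>) \<partial>M)
      \<longlonglongrightarrow> (\<integral>\<omega>. exponential_density l (t - tail (Suc j) \<omega>) \<partial>M)"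
    by (rule Bochner_Integration.integral_dominated_convergence[where w="\<lambda>_. l", OF _ _ _ lim])
       (simp_all add: exponential_density_nonneg[OF l] exponential_density_le[OF l])
  then show ?thesis
    unfolding segment_dens_def dens_def exp_conv_density_def l_def .
qed

lemma dens_ratio_mono: "mono_on {0<..} (\<lambda>t. dens j t / dens (Suc j) t)"
proof (rule mono_onI)
  fix s t :: real
  assume "s \<in> {0<..}" "t \<in> {0<..}" "s \<le> t"
  have "(\<lambda>N. segment_dens j N x / segment_dens (Suc j) N x) \<longlonglongrightarrow> dens j x / dens (Suc j) x"
    if "0 < x" for x
    using dens_pos[OF that, of "Suc j"] by (intro tendsto_divide segment_dens_tendsto_dens) auto
  moreover have "eventually (\<lambda>N. segment_dens j N s / segment_dens (Suc j) N s
      \<le> segment_dens j N t / segment_dens (Suc j) N t) sequentially"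
    using eventually_gt_at_top[of "Suc j"]
  proof eventually_elim
    case (elim N)
    from mono_onD[OF segment_dens_ratio_mono[OF elim shift_ratio_mono_segment_dens[OF elim]]
        \<open>s \<in> {0<..}\<close> \<open>t \<in> {0<..}\<close> \<open>s \<le> t\<close>]
    show ?case
      by simp
  qed
  ultimately show "dens j s / dens (Suc j) s \<le> dens j t / dens (Suc j) t"
    using \<open>s \<in> {0<..}\<close> \<open>t \<in> {0<..}\<close> by (intro tendsto_le[OF sequentially_bot]) auto
qed

section \<open>Unimodality, logarithmic derivative and behaviour at zero\<close>

lemma prob_tail_in_ge:
  assumes "a \<le> b" and "0 \<le> c" and le: "\<And>t. t \<in> {a<..<b} \<Longrightarrow> c \<le> dens j t"
  shows "c * (b - a) \<le> \<P>(\<omega> in M. tail j \<omega> \<in> {a<..<b})"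
proof -
  have "ennreal (c * (b - a)) = (\<integral>\<^sup>+x. ennreal c * indicator {a<..<b} x \<partial>lborel)"
    using assms(1,2) by (simp add: nn_integral_cmult_indicator ennreal_mult)
  also have "\<dots> \<le> (\<integral>\<^sup>+x. ennreal (dens j x) * indicator {a<..<b} x \<partial>lborel)"
    using le by (intro nn_integral_mono) (auto simp: indicator_def intro: ennreal_leI)
  also have "\<dots> = emeasure M {\<omega>\<in>space M. tail j \<omega> \<in> {a<..<b}}"
    using distributed_emeasure[OF distributed_tail, of "{a<..<b}"]
    by (simp add: vimage_def Collect_conj_eq Int_commute)
  finally show ?thesis
    by (simp add: emeasure_eq_measure)
qed

lemma dens_eq_const_propagates:
  assumes const: "\<And>t. t \<in> {a<..<b} \<Longrightarrow> dens j t = c" and t: "t \<in> {a<..<b}"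
  shows "dens (i + j) t = c"
  using t
proof (induction i arbitrary: t)
  case (Suc i)
  have "(dens (i + j) has_real_derivative 0) (at t)"
    using Suc by (intro has_field_derivative_transform_within_open[OF DERIV_const, of "{a<..<b}"])
      auto
  from DERIV_unique[OF dens_has_derivative this] show ?case
    using Suc rate_pos[of "i + j"] by simp
qed (simp add: const)

lemma dens_not_flat:
  assumes ab: "0 < a" "a < b" and eq: "\<And>t. t \<in> {a..b} \<Longrightarrow> dens (Suc j) t = dens j t"
  shows False
proof -
  define c where "c = dens j a"
  have "0 < c"
    unfolding c_def using ab by (intro dens_pos)
  have "dens j t = c" if "t \<in> {a..b}" for t
    unfolding c_def
  proof (rule DERIV_isconst2[OF ab(2)])
    show "continuous_on {a..b} (dens j)"
      by (intro continuous_at_imp_continuous_on ballI isCont_dens)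
    show "DERIV (dens j) x :> 0" if "a < x" "x < b" for x
      using dens_has_derivative[of j x] eq[of x] that by simp
  qed (use that in auto)
  then have flat: "dens (i + j) t = c" if "t \<in> {a<..<b}" for i t
    using that by (intro dens_eq_const_propagates) auto
  have "c * (b - a) \<le> 1 - \<P>(\<omega> in M. tail (i + j) \<omega> \<le> a)" for i
  proof -
    have "c * (b - a) \<le> \<P>(\<omega> in M. tail (i + j) \<omega> \<in> {a<..<b})"
      using ab \<open>0 < c\<close> flat by (intro prob_tail_in_ge) auto
    also have "\<dots> \<le> \<P>(\<omega> in M. \<not> tail (i + j) \<omega> \<le> a)"
      by (intro finite_measure_mono) auto
    also have "\<dots> = 1 - \<P>(\<omega> in M. tail (i + j) \<omega> \<le> a)"
      by (rule prob_neg) simp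
    finally show ?thesis .
  qed
  moreover have "(\<lambda>i. 1 - \<P>(\<omega> in M. tail (i + j) \<omega> \<le> a)) \<longlonglongrightarrow> 1 - 1"
    using LIMSEQ_ignore_initial_segment[OF prob_tail_le_tendsto_1[OF ab(1)], of j]
    by (intro tendsto_diff tendsto_const)
  ultimately have "c * (b - a) \<le> 0"
    by (intro LIMSEQ_le_const) auto
  then show False
    using \<open>0 < c\<close> ab by (simp add: mult_le_0_iff)
qed

definition dens_ratio :: "nat \<Rightarrow> real \<Rightarrow> real" where
  "dens_ratio j t = dens (Suc j) t / dens j t"

lemma dens_ratio_antimono: "0 < s \<Longrightarrow> s \<le> t \<Longrightarrow> dens_ratio j t \<le> dens_ratio j s"
  using mono_onD[OF dens_ratio_mono, of s t j] dens_pos[of s] dens_pos[of t]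
  unfolding dens_ratio_def by (simp add: divide_le_eq le_divide_eq mult.commute)

lemma isCont_dens_ratio: "0 < t \<Longrightarrow> isCont (dens_ratio j) t"
  unfolding dens_ratio_def[abs_def] using dens_pos[of t j] by (intro isCont_divide isCont_dens) auto

lemma dens_has_derivative_ratio:
  assumes "0 < t"
  shows "(dens j has_real_derivative rate j * dens j t * (dens_ratio j t - 1)) (at t)"
proof -
  have "rate j * dens j t * (dens_ratio j t - 1) = rate j * (dens (Suc j) t - dens j t)"
    using dens_pos[OF assms, of j] by (simp add: dens_ratio_def field_simps)
  then show ?thesis
    using dens_has_derivative[of j t] by (simp only:)
qed

lemma dens_ratio_gt_1: "\<exists>t>0. 1 < dens_ratio j t"
proof -
  obtain z where z: "0 < z" "z < 1"
    and mvt: "dens j 1 - dens j 0 = (1 - 0) * (rate j * (dens (Suc j) z - dens j z))"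
    using MVT2[of 0 1 "dens j" "\<lambda>t. rate j * (dens (Suc j) t - dens j t)"] dens_has_derivative
    by auto
  have "0 < rate j * (dens (Suc j) z - dens j z)"
    using mvt dens_pos[of 1 j] by (simp add: dens_0)
  then have "1 < dens_ratio j z"
    using rate_pos[of j] dens_pos[OF z(1), of j] by (simp add: zero_less_mult_iff dens_ratio_def)
  with z show ?thesis
    by blast
qed

text \<open>Otherwise \<open>dens j\<close> would be nondecreasing on \<open>(0, \<infinity>)\<close> and could not integrate to at most \<open>1\<close>.\<close>

lemma dens_ratio_lt_1: "\<exists>t>0. dens_ratio j t < 1"
proof (rule ccontr)
  assume "\<not> ?thesis"
  then have ge: "1 \<le> dens_ratio j t" if "0 < t" for t
    using that not_less by blast
  define c where "c = dens j 1"
  have "0 < c"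
    unfolding c_def by (simp add: dens_pos)
  have up: "\<exists>y. DERIV (dens j) x :> y \<and> 0 \<le> y" if "1 \<le> x" for x
  proof -
    have "0 \<le> rate j * dens j x * (dens_ratio j x - 1)"
      using ge[of x] rate_pos[of j] dens_pos[of x j] that by simp
    then show ?thesis
      using dens_has_derivative_ratio[of x j] that by auto
  qed
  have "c \<le> dens j t" if "t \<in> {1<..<1 + 2 / c}" for t
    unfolding c_def by (rule DERIV_nonneg_imp_nondecreasing[of 1 t]) (use that up in auto)
  then have "c * (1 + 2 / c - 1) \<le> \<P>(\<omega> in M. tail j \<omega> \<in> {1<..<1 + 2 / c})"
    using \<open>0 < c\<close> by (intro prob_tail_in_ge) auto
  moreover have "c * (1 + 2 / c - 1) = 2"
    using \<open>0 < c\<close> by simp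
  ultimately show False
    using prob_le_1[of "{\<omega>\<in>space M. tail j \<omega> \<in> {1<..<1 + 2 / c}}"] by linarith
qed

lemma dens_ratio_eq_1_unique:
  assumes "0 < a" "a < b" "dens_ratio j a = 1" "dens_ratio j b = 1"
  shows False
proof (rule dens_not_flat[OF assms(1,2)])
  fix t assume t: "t \<in> {a..b}"
  then have "dens_ratio j t = 1"
    using dens_ratio_antimono[of a t j] dens_ratio_antimono[of t b j] assms by force
  then show "dens (Suc j) t = dens j t"
    using dens_pos[of t j] assms t by (simp add: dens_ratio_def)
qed

lemma dens_ratio_crossing:
  "\<exists>m>0. (\<forall>t. 0 < t \<and> t < m \<longrightarrow> 1 < dens_ratio j t) \<and> (\<forall>t>m. dens_ratio j t < 1)"
proof -
  obtain t1 where t1: "0 < t1" "1 < dens_ratio j t1"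
    using dens_ratio_gt_1 by blast
  obtain t2 where t2: "0 < t2" "dens_ratio j t2 < 1"
    using dens_ratio_lt_1 by blast
  have "t1 < t2"
  proof (rule ccontr)
    assume "\<not> t1 < t2"
    then have "dens_ratio j t1 \<le> dens_ratio j t2"
      using dens_ratio_antimono[OF t2(1)] by simp
    with t1 t2 show False
      by simp
  qed
  have "continuous_on {t1..t2} (dens_ratio j)"
    using t1 by (intro continuous_at_imp_continuous_on ballI isCont_dens_ratio) auto
  then obtain m where m: "t1 \<le> m" "m \<le> t2" "dens_ratio j m = 1"
    using IVT2'[of "dens_ratio j" t2 1 t1] t1 t2 \<open>t1 < t2\<close> by auto
  have "0 < m"
    using m t1 by simp
  have ne: "dens_ratio j t \<noteq> 1" if "0 < t" "t \<noteq> m" for t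
    using dens_ratio_eq_1_unique[of t m j] dens_ratio_eq_1_unique[of m t j] that \<open>0 < m\<close> m(3)
    by (cases "t < m") auto
  have "1 < dens_ratio j t" if "0 < t" "t < m" for t
    using dens_ratio_antimono[of t m j] ne[of t] that m by fastforce
  moreover have "dens_ratio j t < 1" if "m < t" for t
    using dens_ratio_antimono[of m t j] ne[of t] that m \<open>0 < m\<close> by fastforce
  ultimately show ?thesis
    using \<open>0 < m\<close> by blast
qed

lemma dens_derivative_sign_change:
  "\<exists>m>0. (\<forall>x. 0 < x \<and> x < m \<longrightarrow> (\<exists>y. DERIV (dens j) x :> y \<and> 0 < y)) \<and>
    (\<forall>x>m. \<exists>y. DERIV (dens j) x :> y \<and> y < 0)"
proof -
  obtain m where "0 < m" and below: "\<And>t. 0 < t \<Longrightarrow> t < m \<Longrightarrow> 1 < dens_ratio j t"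
    and above: "\<And>t. m < t \<Longrightarrow> dens_ratio j t < 1"
    using dens_ratio_crossing by blast
  have "\<exists>y. DERIV (dens j) x :> y \<and> 0 < y" if "0 < x" "x < m" for x
  proof -
    have "0 < rate j * dens j x * (dens_ratio j x - 1)"
      using below[OF that] rate_pos[of j] dens_pos[OF that(1), of j] by simp
    then show ?thesis
      using dens_has_derivative_ratio[OF that(1), of j] by blast
  qed
  moreover have "\<exists>y. DERIV (dens j) x :> y \<and> y < 0" if "m < x" for x
  proof -
    have "0 < x"
      using that \<open>0 < m\<close> by simp
    have "rate j * dens j x * (dens_ratio j x - 1) < 0"
      using above[OF that] rate_pos[of j] dens_pos[OF \<open>0 < x\<close>, of j] by (simp add: mult_pos_neg)
    then show ?thesis
      using dens_has_derivative_ratio[OF \<open>0 < x\<close>, of j] by blast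
  qed
  ultimately show ?thesis
    using \<open>0 < m\<close> by blast
qed

lemma dens_unimodal:
  "\<exists>m>0. (\<forall>t. t \<noteq> m \<longrightarrow> dens j t < dens j m) \<and> strict_mono_on {0<..<m} (dens j) \<and>
    monotone_on {m<..} (<) (>) (dens j)"
proof -
  obtain m where "0 < m"
    and up: "\<And>x. 0 < x \<Longrightarrow> x < m \<Longrightarrow> \<exists>y. DERIV (dens j) x :> y \<and> 0 < y"
    and down: "\<And>x. m < x \<Longrightarrow> \<exists>y. DERIV (dens j) x :> y \<and> y < 0"
    using dens_derivative_sign_change by blast
  have cont: "continuous_on {a..b} (dens j)" for a b
    by (intro continuous_at_imp_continuous_on ballI isCont_dens)
  have "dens j t < dens j m" if "t \<noteq> m" for t
  proof -
    consider "t \<le> 0" | "0 < t" "t < m" | "m < t"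
      using \<open>t \<noteq> m\<close> by linarith
    then show ?thesis
    proof cases
      case 1
      then have "dens j t = 0"
        using dens_eq_0[of t j] dens_0[of j] by (cases "t = 0") auto
      then show ?thesis
        using dens_pos[OF \<open>0 < m\<close>] by simp
    next
      case 2
      show ?thesis
        by (rule DERIV_pos_imp_increasing_open[OF 2(2) _ cont]) (use up 2 in auto)
    next
      case 3
      show ?thesis
        by (rule DERIV_neg_imp_decreasing_open[OF 3 _ cont]) (use down in auto)
    qed
  qed
  moreover have "strict_mono_on {0<..<m} (dens j)"
  proof (rule strict_mono_onI)
    fix r s :: real assume "r \<in> {0<..<m}" "s \<in> {0<..<m}" "r < s"
    then show "dens j r < dens j s"
      by (intro DERIV_pos_imp_increasing[OF \<open>r < s\<close>]) (use up in auto)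
  qed
  moreover have "monotone_on {m<..} (<) (>) (dens j)"
  proof (rule monotone_onI)
    fix r s :: real assume "r \<in> {m<..}" "s \<in> {m<..}" "r < s"
    then show "dens j r > dens j s"
      by (intro DERIV_neg_imp_decreasing[OF \<open>r < s\<close>]) (use down in auto)
  qed
  ultimately show ?thesis
    using \<open>0 < m\<close> by blast
qed

lemma ln_dens_derivative_bounded:
  assumes "0 < t0"
  shows "\<exists>B. \<forall>t\<ge>t0. \<exists>d. ((\<lambda>x. ln (dens j x)) has_real_derivative d) (at t) \<and> \<bar>d\<bar> \<le> B"
proof (rule exI[of _ "rate j * (dens_ratio j t0 + 1)"], intro allI impI)
  fix t assume "t0 \<le> t"
  then have "0 < t"
    using assms by simp
  have "inverse (dens j t) * (rate j * dens j t * (dens_ratio j t - 1)) = rate j * (dens_ratio j t - 1)"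
    using dens_pos[OF \<open>0 < t\<close>, of j] by simp
  then have "((\<lambda>x. ln (dens j x)) has_real_derivative rate j * (dens_ratio j t - 1)) (at t)"
    using DERIV_chain2[OF DERIV_ln[OF dens_pos[OF \<open>0 < t\<close>, of j]]
        dens_has_derivative_ratio[OF \<open>0 < t\<close>]]
    by (simp only:)
  moreover have "0 \<le> dens_ratio j t" "dens_ratio j t \<le> dens_ratio j t0"
    using dens_ratio_antimono[OF assms \<open>t0 \<le> t\<close>] dens_nonneg dens_pos[OF \<open>0 < t\<close>, of j]
    by (simp_all add: dens_ratio_def)
  then have "\<bar>rate j * (dens_ratio j t - 1)\<bar> \<le> rate j * (dens_ratio j t0 + 1)"
    using rate_pos[of j] by (simp add: abs_mult abs_le_iff mult_left_mono)
  ultimately show "\<exists>d. ((\<lambda>x. ln (dens j x)) has_real_derivative d) (at t)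
      \<and> \<bar>d\<bar> \<le> rate j * (dens_ratio j t0 + 1)"
    by blast
qed

lemma dens_not_analytic_at_0:
  "\<not> (\<exists>r>0. \<exists>c :: nat \<Rightarrow> real. \<forall>t\<in>ball 0 r. (\<lambda>n. c n * t ^ n) sums dens j t)"
proof safe
  fix r :: real and c :: "nat \<Rightarrow> real"
  assume r: "0 < r" and sums: "\<forall>t\<in>ball 0 r. (\<lambda>n. c n * t ^ n) sums dens j t"
  then have "c n = 0" for n
    by (intro powser_coeffs_zero_if_vanishing_at_left[of r c "dens j"]) (auto simp: dens_eq_0)
  moreover have "(\<lambda>n. c n * (r / 2) ^ n) sums dens j (r / 2)"
    using sums r by simp
  ultimately have "dens j (r / 2) = 0"
    using sums_unique2[OF sums_zero] by simp
  with dens_pos[of "r / 2" j] r show False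
    by simp
qed

end

theorem lemma1:
  fixes M :: "'a measure" and F :: "nat \<Rightarrow> real" and n0 :: nat
    and \<tau> :: "nat \<Rightarrow> 'a \<Rightarrow> real" and T :: "'a \<Rightarrow> real"
  assumes "prob_space M"
    and F_pos: "\<And>k. k \<ge> 1 \<Longrightarrow> F k > 0"
    and F_sum: "summable (\<lambda>k. 1 / F (Suc k))"
    and n0: "n0 \<ge> 1"
    and indep: "prob_space.indep_vars M (\<lambda>_. borel) \<tau> {n0..}"
    and expo: "\<And>k. k \<ge> n0 \<Longrightarrow>
                 distributed M lborel (\<tau> k) (\<lambda>x. ennreal (exponential_density (F k) x))"
    and T_def: "\<And>\<omega>. T \<omega> = (\<Sum>k. \<tau> (k + n0) \<omega>)"
  shows "\<exists>g :: real \<Rightarrow> real.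
           (\<forall>t. g t \<ge> 0) \<and> (\<forall>t<0. g t = 0) \<and>
           distributed M lborel T (\<lambda>t. ennreal (g t)) \<and>
           \<comment> \<open>1.\<close>
           (\<exists>B. \<forall>t. \<bar>g t\<bar> \<le> B) \<and> g 0 = 0 \<and> (\<forall>t>0. g t > 0) \<and>
           \<comment> \<open>2.\<close>
           (\<exists>m>0. (\<forall>t. t \<noteq> m \<longrightarrow> g t < g m) \<and>
                  strict_mono_on {0<..<m} g \<and>
                  monotone_on {m<..} (<) (>) g) \<and>
           \<comment> \<open>3.\<close>
           (\<forall>t0>0. \<exists>B. \<forall>t\<ge>t0. \<exists>d.
                ((\<lambda>x. ln (g x)) has_real_derivative d) (at t) \<and> \<bar>d\<bar> \<le> B) \<and>
           \<comment> \<open>4.\<close>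
           \<not> (\<exists>r>0. \<exists>c :: nat \<Rightarrow> real. \<forall>t\<in>ball 0 r. (\<lambda>n. c n * t ^ n) sums g t) \<and>
           (\<exists>r>0. \<exists>D :: nat \<Rightarrow> real \<Rightarrow> real. D 0 = g \<and>
                (\<forall>k. \<forall>t\<in>ball 0 r. (D k has_real_derivative D (Suc k) t) (at t)) \<and>
                (\<forall>k\<ge>1. D k 0 = 0))"
proof -
  interpret birth_process M F n0 \<tau>
    by (intro birth_process.intro birth_process_axioms.intro assms(1) F_pos F_sum n0 indep expo)
  have "T = tail 0"
    using T_def by (simp add: fun_eq_iff tail_def wait_def)
  show ?thesis
  proof (intro exI[of _ "dens 0"] conjI)
    show "distributed M lborel T (\<lambda>t. ennreal (dens 0 t))"
      using distributed_tail[of 0] \<open>T = tail 0\<close> by simp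
    show "\<exists>B. \<forall>t. \<bar>dens 0 t\<bar> \<le> B"
      using dens_nonneg dens_le by (intro exI[of _ "rate 0"]) (simp add: abs_le_iff)
    show "\<exists>r>0. \<exists>D :: nat \<Rightarrow> real \<Rightarrow> real. D 0 = dens 0 \<and>
        (\<forall>k. \<forall>t\<in>ball 0 r. (D k has_real_derivative D (Suc k) t) (at t)) \<and> (\<forall>k\<ge>1. D k 0 = 0)"
      by (intro exI[of _ "1::real"] conjI exI[of _ "\<lambda>k. dens_deriv k 0"])
         (simp_all add: dens_deriv_has_derivative dens_deriv_0 del: dens_deriv.simps(2))
  qed (use dens_nonneg dens_eq_0 dens_0 dens_pos dens_unimodal ln_dens_derivative_bounded
      dens_not_analytic_at_0 in auto)
qed

end
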